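(* Let $G$ be a plane graph rooted at edge $e$, and let $e'$ be the dual edge of $e$. Then $G$ has a fundamental cycle basis rooted at $e$ (i.e., there is a spanning tree $T$ of $G$ all of whose fundamental cycles contain $e$) if and only if the dual graph of $G$ has a Hamiltonian cycle containing $e'$.
   Context: A plane graph is a connected graph together with a crossing-free embedding in the plane. Its dual graph (possibly with multiple edges and self-loops) has a vertex for each face (including the unbounded face) and, for each edge $f$ of $G$, a dual edge connecting the faces on the two sides of $f$. For a spanning tree $T$, the fundamental cycle of a non-tree edge $f$ is $f$ together with the unique path in $T$ between the endpoints of $f$; the fundamental cycle basis of $T$ is the set of these cycles. A Hamiltonian cycle is a cycle through every vertex. *)

theory Defs
  imports Main "HOL-Combinatorics.Permutations" "HOL-Combinatorics.Orbits"
begin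

text \<open>ends e is the set of endpoints of edge e (one element for a loop).\<close>

definition is_walk :: "'v set \<Rightarrow> 'e set \<Rightarrow> ('e \<Rightarrow> 'v set) \<Rightarrow> 'v list \<Rightarrow> 'e list \<Rightarrow> bool" where
  "is_walk V E ends vs es \<longleftrightarrow>
     length vs = Suc (length es) \<and> set vs \<subseteq> V \<and> set es \<subseteq> E \<and>
     (\<forall>i < length es. ends (es ! i) = {vs ! i, vs ! Suc i})"

definition is_path :: "'v set \<Rightarrow> 'e set \<Rightarrow> ('e \<Rightarrow> 'v set) \<Rightarrow> 'v \<Rightarrow> 'v \<Rightarrow> 'v list \<Rightarrow> 'e list \<Rightarrow> bool" where
  "is_path V E ends u v vs es \<longleftrightarrow>
     is_walk V E ends vs es \<and> hd vs = u \<and> last vs = v \<and> distinct vs"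

text \<open>A cycle: closed walk of length at least 1 with distinct edges and distinct vertices
  (apart from first = last). Loops are cycles of length 1, two parallel edges a cycle of length 2.\<close>
definition is_cycle :: "'v set \<Rightarrow> 'e set \<Rightarrow> ('e \<Rightarrow> 'v set) \<Rightarrow> 'v list \<Rightarrow> 'e list \<Rightarrow> bool" where
  "is_cycle V E ends vs es \<longleftrightarrow>
     is_walk V E ends vs es \<and> es \<noteq> [] \<and> last vs = hd vs \<and>
     distinct es \<and> distinct (butlast vs)"

definition is_hamiltonian_cycle :: "'v set \<Rightarrow> 'e set \<Rightarrow> ('e \<Rightarrow> 'v set) \<Rightarrow> 'v list \<Rightarrow> 'e list \<Rightarrow> bool" where
  "is_hamiltonian_cycle V E ends vs es \<longleftrightarrow> is_cycle V E ends vs es \<and> set vs = V"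

definition graph_connected :: "'v set \<Rightarrow> 'e set \<Rightarrow> ('e \<Rightarrow> 'v set) \<Rightarrow> bool" where
  "graph_connected V E ends \<longleftrightarrow>
     (\<forall>u\<in>V. \<forall>v\<in>V. \<exists>vs es. is_walk V E ends vs es \<and> hd vs = u \<and> last vs = v)"

definition spanning_tree :: "'v set \<Rightarrow> 'e set \<Rightarrow> ('e \<Rightarrow> 'v set) \<Rightarrow> 'e set \<Rightarrow> bool" where
  "spanning_tree V E ends T \<longleftrightarrow>
     T \<subseteq> E \<and> graph_connected V T ends \<and> (\<nexists>vs es. is_cycle V T ends vs es)"

definition tree_path_edges :: "'v set \<Rightarrow> 'e set \<Rightarrow> ('e \<Rightarrow> 'v set) \<Rightarrow> 'v \<Rightarrow> 'v \<Rightarrow> 'e set" where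
  "tree_path_edges V T ends u v = (THE P. \<exists>vs es. is_path V T ends u v vs es \<and> P = set es)"

definition fundamental_cycle :: "'v set \<Rightarrow> ('e \<Rightarrow> 'v set) \<Rightarrow> 'e set \<Rightarrow> 'e \<Rightarrow> 'e set" where
  "fundamental_cycle V ends T f =
     insert f (\<Union>{tree_path_edges V T ends u v | u v. ends f = {u, v}})"

text \<open>Darts D, fixed-point-free involution alpha (the two darts of an edge),
  rotation sigma (cyclic order of darts around each vertex).\<close>

definition map_vertex :: "('d \<Rightarrow> 'd) \<Rightarrow> 'd \<Rightarrow> 'd set" where
  "map_vertex \<sigma> d = orbit \<sigma> d"

definition map_face :: "('d \<Rightarrow> 'd) \<Rightarrow> ('d \<Rightarrow> 'd) \<Rightarrow> 'd \<Rightarrow> 'd set" where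
  "map_face \<alpha> \<sigma> d = orbit (\<sigma> \<circ> \<alpha>) d"

definition map_vertices :: "'d set \<Rightarrow> ('d \<Rightarrow> 'd) \<Rightarrow> 'd set set" where
  "map_vertices D \<sigma> = map_vertex \<sigma> ` D"

definition map_edges :: "'d set \<Rightarrow> ('d \<Rightarrow> 'd) \<Rightarrow> 'd set set" where
  "map_edges D \<alpha> = (\<lambda>d. {d, \<alpha> d}) ` D"

definition map_faces :: "'d set \<Rightarrow> ('d \<Rightarrow> 'd) \<Rightarrow> ('d \<Rightarrow> 'd) \<Rightarrow> 'd set set" where
  "map_faces D \<alpha> \<sigma> = map_face \<alpha> \<sigma> ` D"

definition primal_ends :: "('d \<Rightarrow> 'd) \<Rightarrow> 'd set \<Rightarrow> 'd set set" where
  "primal_ends \<sigma> x = map_vertex \<sigma> ` x"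

text \<open>Endpoints of the dual edge of edge x: the faces on the two sides of x\<close>
definition dual_ends :: "('d \<Rightarrow> 'd) \<Rightarrow> ('d \<Rightarrow> 'd) \<Rightarrow> 'd set \<Rightarrow> 'd set set" where
  "dual_ends \<alpha> \<sigma> x = map_face \<alpha> \<sigma> ` x"

definition comb_map :: "'d set \<Rightarrow> ('d \<Rightarrow> 'd) \<Rightarrow> ('d \<Rightarrow> 'd) \<Rightarrow> bool" where
  "comb_map D \<alpha> \<sigma> \<longleftrightarrow> finite D \<and> \<alpha> permutes D \<and> \<sigma> permutes D \<and>
     (\<forall>d\<in>D. \<alpha> d \<noteq> d \<and> \<alpha> (\<alpha> d) = d)"

text \<open>A plane graph: a connected combinatorial map of genus 0 (Euler: V - E + F = 2).\<close>
definition plane_graph :: "'d set \<Rightarrow> ('d \<Rightarrow> 'd) \<Rightarrow> ('d \<Rightarrow> 'd) \<Rightarrow> bool" where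
  "plane_graph D \<alpha> \<sigma> \<longleftrightarrow> comb_map D \<alpha> \<sigma> \<and>
     graph_connected (map_vertices D \<sigma>) (map_edges D \<alpha>) (primal_ends \<sigma>) \<and>
     int (card (map_vertices D \<sigma>)) - int (card (map_edges D \<alpha>)) + int (card (map_faces D \<alpha> \<sigma>)) = 2"

definition simple_map :: "'d set \<Rightarrow> ('d \<Rightarrow> 'd) \<Rightarrow> ('d \<Rightarrow> 'd) \<Rightarrow> bool" where
  "simple_map D \<alpha> \<sigma> \<longleftrightarrow>
     (\<forall>d\<in>D. map_vertex \<sigma> d \<noteq> map_vertex \<sigma> (\<alpha> d)) \<and>
     (\<forall>x\<in>map_edges D \<alpha>. \<forall>y\<in>map_edges D \<alpha>. primal_ends \<sigma> x = primal_ends \<sigma> y \<longrightarrow> x = y)"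

end

theory Submission
  imports Defs
begin

text \<open>
  For T \<subseteq> E write T* = E - T. In a plane graph, T is a spanning tree iff T* is a spanning tree
  of the dual. Indeed, if the dual of E - S were disconnected for a forest S, the darts whose faces
  are reachable from a fixed face would have a nonempty boundary whose edges all lie in S; since
  every vertex rotation crosses that set of darts an even number of times, these edges contain a
  cycle. Euler's formula then matches the sizes of T and T*.

  For a tree edge e and a non-tree edge f, e lies on the fundamental cycle of f iff T - e + f is a
  spanning tree, i.e.\ iff T* - f + e is a spanning tree of the dual. A spanning tree P avoiding e
  such that P - f + e is a spanning tree for every f \<in> P is exactly a Hamiltonian path between the
  ends of e, and a Hamiltonian cycle through e minus e is such a tree. Finally, a tree T whose
  fundamental cycles all contain e but with e \<notin> T has T* = {e}; since e is not a loop, exchanging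
  e for an edge of the T-path between its ends gives such a tree containing e.
\<close>

section \<open>Walks\<close>

lemma is_walk_mono:
  "is_walk V S ends vs es \<Longrightarrow> V \<subseteq> V' \<Longrightarrow> S \<subseteq> S' \<Longrightarrow> is_walk V' S' ends vs es"
  unfolding is_walk_def by auto

lemma is_cycle_mono:
  "is_cycle V S ends vs es \<Longrightarrow> V \<subseteq> V' \<Longrightarrow> S \<subseteq> S' \<Longrightarrow> is_cycle V' S' ends vs es"
  unfolding is_cycle_def using is_walk_mono by blast

lemma is_walk_take:
  assumes "is_walk V S ends vs es" "k \<le> length es"
  shows "is_walk V S ends (take (Suc k) vs) (take k es)"
  using assms unfolding is_walk_def by (auto dest: in_set_takeD simp: min_def)

lemma is_walk_hd_last:
  assumes "is_walk V S ends vs es"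
  shows "hd vs = vs ! 0" "last vs = vs ! length es"
proof -
  have "length vs = Suc (length es)" using assms unfolding is_walk_def by auto
  then have "vs \<noteq> []" by auto
  then show "hd vs = vs ! 0" "last vs = vs ! length es"
    using \<open>length vs = Suc (length es)\<close> by (simp_all add: hd_conv_nth last_conv_nth)
qed

lemma is_walk_snoc:
  assumes "is_walk V S ends vs es" "ends x = {last vs, w}" "w \<in> V" "x \<in> S"
  shows "is_walk V S ends (vs @ [w]) (es @ [x])"
  unfolding is_walk_def
proof (intro conjI allI impI)
  have len: "length vs = Suc (length es)" using assms(1) unfolding is_walk_def by auto
  fix i assume "i < length (es @ [x])"
  then consider "i < length es" | "i = length es" by fastforce
  then show "ends ((es @ [x]) ! i) = {(vs @ [w]) ! i, (vs @ [w]) ! Suc i}"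
  proof cases
    case 1
    then show ?thesis using assms(1) len unfolding is_walk_def by (auto simp: nth_append)
  next
    case 2
    then show ?thesis using assms(2) len is_walk_hd_last[OF assms(1)] by (auto simp: nth_append)
  qed
qed (use assms in \<open>auto simp: is_walk_def\<close>)

lemma is_walk_distinct_edges:
  assumes "is_walk V S ends vs es" "distinct vs"
  shows "distinct es"
proof -
  have len: "length vs = Suc (length es)" using assms(1) unfolding is_walk_def by auto
  have "es ! i \<noteq> es ! j" if ij: "i < j" "j < length es" for i j
  proof -
    have "ends (es ! i) = {vs ! i, vs ! Suc i}" "ends (es ! j) = {vs ! j, vs ! Suc j}"
      using assms(1) ij unfolding is_walk_def by auto
    moreover have "vs ! i \<noteq> vs ! j" "vs ! i \<noteq> vs ! Suc j"
      using assms(2) ij len by (simp_all add: nth_eq_iff_index_eq)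
    ultimately show ?thesis by (metis insertI1 insertE singletonD)
  qed
  then show ?thesis unfolding distinct_conv_nth by (metis linorder_neqE_nat)
qed

lemma set_butlast_closed_walk:
  assumes "last vs = hd vs" "butlast vs \<noteq> []"
  shows "set (butlast vs) = set vs"
proof -
  have vs: "vs = butlast vs @ [last vs]" using assms(2) by (cases vs) auto
  have "hd vs = hd (butlast vs)" using assms(2) by (subst vs) simp
  then have "last vs \<in> set (butlast vs)" using assms by simp
  then show ?thesis by (subst (2) vs) auto
qed

section \<open>Connectivity and spanning trees of finite multigraphs\<close>

locale fin_multigraph =
  fixes V :: "'v set" and E :: "'e set" and ends :: "'e \<Rightarrow> 'v set"
  assumes finite_V: "finite V" and finite_E: "finite E"
    and edge_ends: "\<And>x. x \<in> E \<Longrightarrow> \<exists>u\<in>V. \<exists>v\<in>V. ends x = {u, v}"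
begin

lemma obtain_ends:
  assumes "x \<in> E"
  obtains u v where "ends x = {u, v}" "u \<in> V" "v \<in> V"
  using edge_ends[OF assms] by blast

lemma ends_in_V: "x \<in> E \<Longrightarrow> ends x = {a, b} \<Longrightarrow> a \<in> V \<and> b \<in> V"
  by (metis edge_ends insert_iff singletonD)

definition adj :: "'e set \<Rightarrow> ('v \<times> 'v) set" where
  "adj S = {(u, v). u \<in> V \<and> v \<in> V \<and> (\<exists>x\<in>S. ends x = {u, v})}"

definition conn :: "'e set \<Rightarrow> 'v \<Rightarrow> 'v \<Rightarrow> bool" where
  "conn S a b \<longleftrightarrow> a \<in> V \<and> (a, b) \<in> (adj S)\<^sup>*"

definition connects :: "'e set \<Rightarrow> bool" where
  "connects S \<longleftrightarrow> (\<forall>a\<in>V. \<forall>b\<in>V. conn S a b)"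

definition forest :: "'e set \<Rightarrow> bool" where
  "forest S \<longleftrightarrow> (\<nexists>vs es. is_cycle V S ends vs es)"

lemma conn_refl: "a \<in> V \<Longrightarrow> conn S a a"
  by (simp add: conn_def)

lemma conn_in_V: "conn S a b \<Longrightarrow> a \<in> V \<and> b \<in> V"
  unfolding conn_def by (auto elim: rtranclE simp: adj_def)

lemma conn_sym: "conn S a b \<Longrightarrow> conn S b a"
proof -
  have "sym (adj S)" unfolding adj_def sym_def by (auto simp: insert_commute)
  then show "conn S a b \<Longrightarrow> conn S b a"
    using conn_in_V unfolding conn_def by (meson sym_rtrancl symD)
qed

lemma conn_trans: "conn S a b \<Longrightarrow> conn S b c \<Longrightarrow> conn S a c"
  unfolding conn_def by auto

lemma conn_mono: "conn S a b \<Longrightarrow> S \<subseteq> S' \<Longrightarrow> conn S' a b"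
proof -
  assume "conn S a b" "S \<subseteq> S'"
  moreover from \<open>S \<subseteq> S'\<close> have "adj S \<subseteq> adj S'" unfolding adj_def by auto
  ultimately show ?thesis unfolding conn_def using rtrancl_mono by blast
qed

lemma conn_edge: "x \<in> S \<Longrightarrow> ends x = {u, v} \<Longrightarrow> u \<in> V \<Longrightarrow> v \<in> V \<Longrightarrow> conn S u v"
  unfolding conn_def adj_def by auto

lemma conn_walk_segment:
  assumes "is_walk V S' ends vs es" "i \<le> j" "j \<le> length es"
    and "\<And>m. i \<le> m \<Longrightarrow> m < j \<Longrightarrow> es ! m \<in> S"
  shows "conn S (vs ! i) (vs ! j)"
  using assms(2-4)
proof (induction j)
  case 0
  then show ?case using assms(1) unfolding is_walk_def by (auto intro!: conn_refl)
next
  case (Suc j)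
  have len: "length vs = Suc (length es)" and "set vs \<subseteq> V"
    using assms(1) unfolding is_walk_def by auto
  then have inV: "vs ! k \<in> V" if "k \<le> length es" for k using that by auto
  show ?case
  proof (cases "i = Suc j")
    case True
    then show ?thesis using inV Suc.prems by (auto intro!: conn_refl)
  next
    case False
    then have "conn S (vs ! i) (vs ! j)" using Suc by auto
    moreover have "conn S (vs ! j) (vs ! Suc j)"
      using assms(1) Suc.prems False inV unfolding is_walk_def by (intro conn_edge[of "es ! j"]) auto
    ultimately show ?thesis using conn_trans by blast
  qed
qed

lemma conn_walk:
  assumes "is_walk V S ends vs es"
  shows "conn S (hd vs) (last vs)"
proof -
  have "conn S (vs ! 0) (vs ! length es)"
    by (rule conn_walk_segment[OF assms]) (use assms in \<open>auto simp: is_walk_def\<close>)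
  then show ?thesis by (simp add: is_walk_hd_last[OF assms])
qed

lemma conn_obtain_path:
  assumes "conn S a b"
  obtains vs es where "is_path V S ends a b vs es"
proof -
  have "(a, b) \<in> (adj S)\<^sup>*" using assms conn_def by auto
  then have "\<exists>vs es. is_path V S ends a b vs es"
  proof (induction rule: rtrancl_induct)
    case base
    have "is_path V S ends a a [a] []"
      using conn_in_V[OF assms] unfolding is_path_def is_walk_def by auto
    then show ?case by blast
  next
    case (step y z)
    then obtain vs es where "is_path V S ends a y vs es" by blast
    then have w: "is_walk V S ends vs es" and h: "hd vs = a" "last vs = y" "distinct vs"
      and len: "length vs = Suc (length es)"
      unfolding is_path_def is_walk_def by auto
    then have "vs \<noteq> []" by auto
    show ?case
    proof (cases "z \<in> set vs")
      case True
      then obtain k where k: "k < length vs" "vs ! k = z" by (metis in_set_conv_nth)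
      moreover have "is_walk V S ends (take (Suc k) vs) (take k es)"
        using is_walk_take[OF w, of k] k len by simp
      moreover have "last (take (Suc k) vs) = z" using k by (simp add: take_Suc_conv_app_nth)
      ultimately have "is_path V S ends a z (take (Suc k) vs) (take k es)"
        using h unfolding is_path_def by (simp add: hd_take)
      then show ?thesis by blast
    next
      case False
      obtain x where "x \<in> S" "ends x = {y, z}" "z \<in> V" using step(2) unfolding adj_def by auto
      then have "is_walk V S ends (vs @ [z]) (es @ [x])"
        using is_walk_snoc[OF w] h by simp
      then have "is_path V S ends a z (vs @ [z]) (es @ [x])"
        using h False \<open>vs \<noteq> []\<close> unfolding is_path_def by simp
      then show ?thesis by blast
    qed
  qed
  then show ?thesis using that by blast
qed

lemma graph_connected_iff: "graph_connected V S ends \<longleftrightarrow> connects S"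
  unfolding graph_connected_def connects_def is_path_def[symmetric]
  using conn_walk conn_obtain_path unfolding is_path_def by metis

lemma conn_insert_cases:
  assumes "conn (insert x S) a b" "ends x = {u, v}"
  shows "conn S a b \<or> (conn S a u \<and> conn S v b) \<or> (conn S a v \<and> conn S u b)"
proof -
  have "(a, b) \<in> (adj (insert x S))\<^sup>*" "a \<in> V" using assms conn_def by auto
  then show ?thesis
  proof (induction rule: rtrancl_induct)
    case base
    then show ?case using conn_refl by auto
  next
    case (step y z)
    then obtain x' where x': "x' \<in> insert x S" "ends x' = {y, z}" "y \<in> V" "z \<in> V"
      unfolding adj_def by auto
    show ?case
    proof (cases "x' \<in> S")
      case True
      then have "conn S y z" using x' conn_edge by blast
      then show ?thesis using step conn_trans by blast
    next
      case False
      then have "{y, z} = {u, v}" using x' assms(2) by auto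
      then have "(y = u \<and> z = v) \<or> (y = v \<and> z = u)" by (auto simp: doubleton_eq_iff)
      then show ?thesis using step x' conn_refl conn_trans by metis
    qed
  qed
qed

lemma conn_insert_iff:
  assumes "ends x = {u, v}" "u \<in> V" "v \<in> V"
  shows "conn (insert x S) a b \<longleftrightarrow>
           conn S a b \<or> (conn S a u \<and> conn S v b) \<or> (conn S a v \<and> conn S u b)"
proof
  assume "conn (insert x S) a b"
  then show "conn S a b \<or> (conn S a u \<and> conn S v b) \<or> (conn S a v \<and> conn S u b)"
    using conn_insert_cases assms(1) by blast
next
  have uv: "conn (insert x S) u v" "conn (insert x S) v u"
    using conn_edge[of x "insert x S"] assms by (auto simp: insert_commute)
  have mono: "conn S p q \<Longrightarrow> conn (insert x S) p q" for p q
    using conn_mono by blast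
  assume "conn S a b \<or> (conn S a u \<and> conn S v b) \<or> (conn S a v \<and> conn S u b)"
  then show "conn (insert x S) a b"
    using uv by (elim disjE conjE) (auto dest!: mono intro: conn_trans)
qed

lemma not_forest_if_conn_Diff:
  assumes "x \<in> S" "ends x = {u, v}" "conn (S - {x}) u v"
  shows "\<not> forest S"
proof -
  obtain vs es where p: "is_path V (S - {x}) ends u v vs es"
    using conn_obtain_path assms(3) by blast
  then have w: "is_walk V (S - {x}) ends vs es" and h: "hd vs = u" "last vs = v" "distinct vs"
    unfolding is_path_def by auto
  have "is_walk V S ends (vs @ [u]) (es @ [x])"
    using is_walk_snoc[OF is_walk_mono[OF w order.refl, of S], of x u] assms h conn_in_V
    by (auto simp: insert_commute)
  moreover have "distinct es" "x \<notin> set es" "vs \<noteq> []"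
    using is_walk_distinct_edges[OF w h(3)] w unfolding is_walk_def by auto
  ultimately have "is_cycle V S ends (vs @ [u]) (es @ [x])"
    unfolding is_cycle_def using h by auto
  then show ?thesis unfolding forest_def by blast
qed

lemma cycle_obtain_non_bridge:
  assumes "is_cycle V S ends vs es"
  obtains x a b where "x \<in> S" "ends x = {a, b}" "conn (S - {x}) a b"
proof -
  have w: "is_walk V S ends vs es" and ne: "es \<noteq> []" and c: "last vs = hd vs" "distinct es"
    using assms unfolding is_cycle_def by auto
  have len: "length vs = Suc (length es)" and "set es \<subseteq> S"
    and ends_es: "\<forall>i<length es. ends (es ! i) = {vs ! i, vs ! Suc i}"
    using w unfolding is_walk_def by auto
  have "conn (S - {es ! 0}) (vs ! 1) (vs ! length es)"
    by (rule conn_walk_segment[OF w])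
      (use ne c \<open>set es \<subseteq> S\<close> in \<open>auto simp: Suc_le_eq nth_eq_iff_index_eq\<close>)
  moreover have "vs ! length es = vs ! 0"
    using c is_walk_hd_last[OF w] by simp
  ultimately have "conn (S - {es ! 0}) (vs ! 0) (vs ! 1)" using conn_sym by auto
  moreover have "es ! 0 \<in> S" "ends (es ! 0) = {vs ! 0, vs ! 1}"
    using ne ends_es \<open>set es \<subseteq> S\<close> by auto
  ultimately show ?thesis using that by blast
qed

lemma forest_mono: "forest S \<Longrightarrow> S' \<subseteq> S \<Longrightarrow> forest S'"
  unfolding forest_def using is_cycle_mono by blast

definition component :: "'e set \<Rightarrow> 'v \<Rightarrow> 'v set" where
  "component S w = {z. conn S w z}"

definition components :: "'e set \<Rightarrow> 'v set set" where
  "components S = component S ` V"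

lemma component_eq: "conn S w z \<Longrightarrow> component S w = component S z"
  unfolding component_def by (blast intro: conn_trans dest: conn_sym)

lemma mem_component_iff: "z \<in> component S w \<longleftrightarrow> conn S w z"
  by (simp add: component_def)

lemma finite_components: "finite (components S)"
  unfolding components_def using finite_V by simp

lemma card_components_empty: "card (components {}) = card V"
proof -
  have "conn {} w z \<longleftrightarrow> w \<in> V \<and> z = w" for w z
    unfolding conn_def adj_def by auto
  then have "components {} = (\<lambda>w. {w}) ` V"
    unfolding components_def component_def by auto
  then show ?thesis by (simp add: card_image)
qed

lemma conn_trans_iff: "conn S a b \<Longrightarrow> conn S a z \<longleftrightarrow> conn S b z"
  using conn_sym conn_trans by metis

lemma components_insert_conn:
  assumes "ends x = {u, v}" "u \<in> V" "v \<in> V" "conn S u v"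
  shows "components (insert x S) = components S"
proof -
  have "conn S w z" if "conn S w u" "conn S v z" for w z
    using conn_trans[OF conn_trans[OF that(1) assms(4)] that(2)] .
  moreover have "conn S w z" if "conn S w v" "conn S u z" for w z
    using conn_trans[OF conn_trans[OF that(1) conn_sym[OF assms(4)]] that(2)] .
  ultimately have "conn (insert x S) w z \<longleftrightarrow> conn S w z" for w z
    unfolding conn_insert_iff[OF assms(1-3)] by blast
  then have "conn (insert x S) = conn S" by (simp add: fun_eq_iff)
  then show ?thesis unfolding components_def component_def by simp
qed

lemma component_insert_not_conn:
  assumes "ends x = {u, v}" "u \<in> V" "v \<in> V" "\<not> conn S u v"
  shows "component (insert x S) w =
    (if conn S u w \<or> conn S v w then component S u \<union> component S v else component S w)"
proof (cases "conn S u w \<or> conn S v w")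
  case True
  then consider "conn S w u" | "conn S w v" using conn_sym by blast
  then have "conn (insert x S) w z \<longleftrightarrow> conn S u z \<or> conn S v z" for z
  proof cases
    case 1
    then show ?thesis using assms conn_refl conn_trans_iff[OF 1] conn_trans_iff[OF 1, of v]
      unfolding conn_insert_iff[OF assms(1-3)] by auto
  next
    case 2
    then show ?thesis using assms conn_refl conn_trans_iff[OF 2] conn_trans_iff[OF 2, of u] conn_sym
      unfolding conn_insert_iff[OF assms(1-3)] by auto
  qed
  then show ?thesis using True unfolding component_def by auto
next
  case False
  then have "conn (insert x S) w z \<longleftrightarrow> conn S w z" for z
    unfolding conn_insert_iff[OF assms(1-3)] using conn_sym by blast
  then show ?thesis using False unfolding component_def by auto
qed

lemma components_insert_not_conn:
  assumes "ends x = {u, v}" "u \<in> V" "v \<in> V" "\<not> conn S u v"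
  shows "components (insert x S) =
    insert (component S u \<union> component S v) (components S - {component S u, component S v})"
    (is "_ = insert ?C (_ - {?Cu, ?Cv})")
proof
  note merge = component_insert_not_conn[OF assms]
  have away: "component S w \<noteq> ?Cu \<and> component S w \<noteq> ?Cv \<longleftrightarrow> \<not> (conn S u w \<or> conn S v w)"
    if "w \<in> V" for w
    using that conn_refl[of w S] component_eq[of S u w] component_eq[of S v w]
    unfolding mem_component_iff[symmetric] by blast
  show "components (insert x S) \<subseteq> insert ?C (components S - {?Cu, ?Cv})"
    unfolding components_def using merge away by auto
  show "insert ?C (components S - {?Cu, ?Cv}) \<subseteq> components (insert x S)"
  proof
    fix C assume "C \<in> insert ?C (components S - {?Cu, ?Cv})"
    then consider "C = ?C" | w where "w \<in> V" "C = component S w" "C \<noteq> ?Cu" "C \<noteq> ?Cv"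
      unfolding components_def by auto
    then show "C \<in> components (insert x S)"
    proof cases
      case 1
      then have "C = component (insert x S) u" using merge conn_refl[OF assms(2)] by simp
      then show ?thesis using assms(2) unfolding components_def by auto
    next
      case 2
      then have "C = component (insert x S) w" using merge away by auto
      then show ?thesis using 2 unfolding components_def by auto
    qed
  qed
qed

lemma card_components_insert_not_conn:
  assumes "ends x = {u, v}" "u \<in> V" "v \<in> V" "\<not> conn S u v"
  shows "card (components (insert x S)) + 1 = card (components S)"
proof -
  let ?Cu = "component S u" and ?Cv = "component S v"
  have in_comps: "?Cu \<in> components S" "?Cv \<in> components S"
    using assms unfolding components_def by auto
  have "?Cu \<noteq> ?Cv" using assms conn_refl[of v S] unfolding component_def by auto
  moreover have "card {?Cu, ?Cv} \<le> card (components S)"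
    using in_comps by (intro card_mono finite_components) auto
  ultimately have "card (components S - {?Cu, ?Cv}) + 2 = card (components S)"
    using in_comps finite_components by (simp add: card_Diff_subset)
  moreover have "?Cu \<union> ?Cv \<notin> components S - {?Cu, ?Cv}"
  proof
    assume "?Cu \<union> ?Cv \<in> components S - {?Cu, ?Cv}"
    then obtain w where "?Cu \<union> ?Cv = component S w" "component S w \<noteq> ?Cu"
      unfolding components_def by auto
    then show False using assms(2) conn_refl[of u S] component_eq conn_sym
      unfolding mem_component_iff[symmetric] by (metis UnI1)
  qed
  ultimately show ?thesis
    using components_insert_not_conn[OF assms] finite_components by simp
qed

lemma card_V_le_components:
  assumes "finite S" "S \<subseteq> E"
  shows "card V \<le> card (components S) + card S"
    and "forest S \<Longrightarrow> card V = card (components S) + card S"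
proof -
  have "card V \<le> card (components S) + card S \<and>
        (forest S \<longrightarrow> card V = card (components S) + card S)"
    using assms
  proof (induction S rule: finite_induct)
    case empty
    then show ?case by (simp add: card_components_empty)
  next
    case (insert x S)
    have "x \<in> E" "S \<subseteq> E" using insert.prems by auto
    then have IH: "card V \<le> card (components S) + card S"
      "forest S \<Longrightarrow> card V = card (components S) + card S"
      using insert.IH by auto
    obtain u v where uv: "ends x = {u, v}" "u \<in> V" "v \<in> V"
      by (rule obtain_ends[OF \<open>x \<in> E\<close>])
    show ?case
    proof (cases "conn S u v")
      case True
      have "insert x S - {x} = S" using insert.hyps(2) by simp
      then have "\<not> forest (insert x S)"
        using not_forest_if_conn_Diff[of x "insert x S" u v] uv True by simp
      then show ?thesis using IH components_insert_conn[OF uv True] insert.hyps by simp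
    next
      case False
      have "forest (insert x S) \<Longrightarrow> forest S" using forest_mono by blast
      moreover have "card (insert x S) = Suc (card S)" using insert.hyps by simp
      ultimately show ?thesis using IH card_components_insert_not_conn[OF uv False] by auto
    qed
  qed
  then show "card V \<le> card (components S) + card S"
    and "forest S \<Longrightarrow> card V = card (components S) + card S" by auto
qed

lemma card_le_if_connects:
  assumes "S \<subseteq> E" "connects S" "V \<noteq> {}"
  shows "card V \<le> card S + 1"
proof -
  obtain a where a: "a \<in> V" using assms(3) by auto
  have "components S \<subseteq> {component S a}"
    using assms(2) a component_eq unfolding components_def connects_def by blast
  then have "card (components S) \<le> 1" using card_mono[of "{component S a}"] by simp
  moreover have "finite S" using assms(1) finite_E by (rule finite_subset)
  ultimately show ?thesis using card_V_le_components(1) assms(1) by fastforce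
qed

lemma card_forest:
  assumes "S \<subseteq> E" "forest S" "V \<noteq> {}"
  shows "card S + 1 \<le> card V"
proof -
  have "components S \<noteq> {}" using assms(3) unfolding components_def by auto
  then have "card (components S) \<ge> 1" using finite_components by (simp add: Suc_leI card_gt_0_iff)
  moreover have "finite S" using assms(1) finite_E by (rule finite_subset)
  ultimately show ?thesis using card_V_le_components(2) assms(1,2) by fastforce
qed

lemma spanning_tree_iff: "spanning_tree V E ends T \<longleftrightarrow> T \<subseteq> E \<and> connects T \<and> forest T"
  unfolding spanning_tree_def graph_connected_iff forest_def by auto

lemma card_spanning_tree:
  assumes "spanning_tree V E ends T" "V \<noteq> {}"
  shows "card T + 1 = card V"
proof -
  have "T \<subseteq> E" "connects T" "forest T" using assms(1) unfolding spanning_tree_iff by auto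
  then show ?thesis using card_le_if_connects card_forest assms(2) by (meson le_antisym)
qed

lemma conn_Diff_non_bridge:
  assumes "x \<in> S" "ends x = {a, b}" "conn (S - {x}) a b" "conn S w z"
  shows "conn (S - {x}) w z"
proof -
  have "conn (insert x (S - {x})) w z" using assms(1,4) by (simp add: insert_absorb)
  from conn_insert_cases[OF this assms(2)] show ?thesis
  proof (elim disjE conjE)
    assume "conn (S - {x}) w a" "conn (S - {x}) b z"
    then show ?thesis by (rule conn_trans[OF conn_trans[OF _ assms(3)]])
  next
    assume "conn (S - {x}) w b" "conn (S - {x}) a z"
    then show ?thesis by (rule conn_trans[OF conn_trans[OF _ conn_sym[OF assms(3)]]])
  qed
qed

lemma spanning_tree_if_card:
  assumes "T \<subseteq> E" "connects T" "card T + 1 = card V"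
  shows "spanning_tree V E ends T"
proof -
  have "forest T"
  proof (rule ccontr)
    assume "\<not> forest T"
    then obtain vs es where "is_cycle V T ends vs es" unfolding forest_def by auto
    then obtain x a b where x: "x \<in> T" "ends x = {a, b}" "conn (T - {x}) a b"
      by (rule cycle_obtain_non_bridge)
    have "connects (T - {x})"
      using assms(2) conn_Diff_non_bridge[OF x] unfolding connects_def by blast
    moreover have "V \<noteq> {}" using assms(3) by auto
    ultimately have "card V \<le> card (T - {x}) + 1"
      using assms(1) card_le_if_connects[of "T - {x}"] by auto
    moreover have "finite T" using assms(1) finite_E by (rule finite_subset)
    then have "Suc (card (T - {x})) = card T" using x(1) by (rule card_Suc_Diff1)
    ultimately show False using assms(3) by linarith
  qed
  then show ?thesis unfolding spanning_tree_iff using assms(1,2) by simp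
qed

lemma tree_path_set:
  assumes T: "spanning_tree V E ends T" and p: "is_path V T ends u v vs es"
  shows "set es = {x \<in> T. \<not> conn (T - {x}) u v}"
proof (intro set_eqI iffI)
  have w: "is_walk V T ends vs es" and h: "hd vs = u" "last vs = v" "distinct vs"
    using p unfolding is_path_def by auto
  have es: "set es \<subseteq> T" "\<forall>i<length es. ends (es ! i) = {vs ! i, vs ! Suc i}"
    using w unfolding is_walk_def by auto
  have distinct: "distinct es" using is_walk_distinct_edges[OF w h(3)] .
  {
    fix x assume "x \<in> set es"
    then obtain i where i: "i < length es" "es ! i = x" by (metis in_set_conv_nth)
    have "x \<in> T" using \<open>x \<in> set es\<close> es by auto
    have c: "conn (T - {x}) (vs ! 0) (vs ! i)" "conn (T - {x}) (vs ! Suc i) (vs ! length es)"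
      by (rule conn_walk_segment[OF w];
          use i es distinct in \<open>auto simp: nth_eq_iff_index_eq\<close>)+
    have "\<not> conn (T - {x}) (vs ! 0) (vs ! length es)"
    proof
      assume "conn (T - {x}) (vs ! 0) (vs ! length es)"
      then have "conn (T - {x}) (vs ! i) (vs ! Suc i)"
        by (rule conn_trans[OF conn_trans[OF conn_sym[OF c(1)]] conn_sym[OF c(2)]])
      moreover have "forest T" "ends x = {vs ! i, vs ! Suc i}"
        using T spanning_tree_iff i es by auto
      ultimately show False using not_forest_if_conn_Diff \<open>x \<in> T\<close> by blast
    qed
    then show "x \<in> {x \<in> T. \<not> conn (T - {x}) u v}"
      using \<open>x \<in> T\<close> h is_walk_hd_last[OF w] by simp
  }
  fix x assume x: "x \<in> {x \<in> T. \<not> conn (T - {x}) u v}"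
  show "x \<in> set es"
  proof (rule ccontr)
    assume "x \<notin> set es"
    then have "is_walk V (T - {x}) ends vs es" using w unfolding is_walk_def by auto
    then have "conn (T - {x}) u v" using conn_walk h by fastforce
    then show False using x by simp
  qed
qed

lemma tree_path_edges_eq:
  assumes T: "spanning_tree V E ends T" and "u \<in> V" "v \<in> V"
  shows "tree_path_edges V T ends u v = {x \<in> T. \<not> conn (T - {x}) u v}"
proof -
  have "conn T u v" using T assms unfolding spanning_tree_iff connects_def by auto
  then obtain vs es where p: "is_path V T ends u v vs es" by (rule conn_obtain_path)
  show ?thesis unfolding tree_path_edges_def
  proof (rule the_equality)
    show "\<exists>vs es. is_path V T ends u v vs es \<and> {x \<in> T. \<not> conn (T - {x}) u v} = set es"
      using p tree_path_set[OF T p] by auto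
  qed (use tree_path_set[OF T] in auto)
qed

lemma obtain_tree_path_edge:
  assumes T: "spanning_tree V E ends T" and "u \<in> V" "v \<in> V" "u \<noteq> v"
  obtains x where "x \<in> T" "\<not> conn (T - {x}) u v"
proof -
  have "conn T u v" using T assms unfolding spanning_tree_iff connects_def by auto
  then obtain vs es where p: "is_path V T ends u v vs es" by (rule conn_obtain_path)
  have "es \<noteq> []"
  proof
    assume "es = []"
    then have "length vs = 1" using p unfolding is_path_def is_walk_def by auto
    then show False using p assms(4) unfolding is_path_def by (cases vs) auto
  qed
  then have "hd es \<in> set es" by simp
  then have "hd es \<in> {x \<in> T. \<not> conn (T - {x}) u v}" using tree_path_set[OF T p] by simp
  then show ?thesis using that by blast
qed

lemma connects_exchange:
  assumes T: "spanning_tree V E ends T" and x: "x \<in> T" "ends x = {a, b}"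
    and f: "f \<in> E" "ends f = {u, v}" "\<not> conn (T - {x}) u v"
  shows "connects (insert f (T - {x}))"
proof -
  let ?R = "T - {x}" and ?T' = "insert f (T - {x})"
  have "T \<subseteq> E" "connects T" using T spanning_tree_iff by auto
  then have abV: "a \<in> V" "b \<in> V" and uvV: "u \<in> V" "v \<in> V"
    using x f ends_in_V by auto
  have side: "conn ?R w a \<or> conn ?R w b" if "w \<in> V" for w
  proof -
    have "conn (insert x ?R) w a"
      using \<open>connects T\<close> that abV x(1) unfolding connects_def by (simp add: insert_absorb)
    from conn_insert_cases[OF this x(2)] show ?thesis by blast
  qed
  have mono: "conn ?R p q \<Longrightarrow> conn ?T' p q" for p q by (erule conn_mono) blast
  have uv: "conn ?T' u v" using conn_edge[of f ?T'] f uvV by auto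
  have ab: "conn ?T' a b"
  proof (cases "conn ?R u a")
    case True
    have "\<not> conn ?R v a" using f(3) conn_trans[OF True conn_sym] by blast
    then have "conn ?R v b" using side[OF uvV(2)] by blast
    then show ?thesis by (rule conn_trans[OF conn_trans[OF mono[OF conn_sym[OF True]] uv] mono])
  next
    case False
    then have ub: "conn ?R u b" using side[OF uvV(1)] by blast
    have "\<not> conn ?R v b" using f(3) conn_trans[OF ub conn_sym] by blast
    then have "conn ?R v a" using side[OF uvV(2)] by blast
    then show ?thesis
      by (rule conn_trans[OF conn_trans[OF mono[OF conn_sym] conn_sym[OF uv]] mono[OF ub]])
  qed
  have to_a: "conn ?T' w a" if "w \<in> V" for w
    using side[OF that] mono conn_trans[OF mono conn_sym[OF ab]] by blast
  show ?thesis unfolding connects_def using conn_trans[OF to_a conn_sym[OF to_a]] by blast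
qed

lemma spanning_tree_exchange_iff:
  assumes T: "spanning_tree V E ends T" and x: "x \<in> T" and f: "f \<in> E - T" "ends f = {u, v}"
  shows "spanning_tree V E ends (insert f (T - {x})) \<longleftrightarrow> \<not> conn (T - {x}) u v"
proof
  assume "spanning_tree V E ends (insert f (T - {x}))"
  then have "forest (insert f (T - {x}))" using spanning_tree_iff by auto
  moreover have "insert f (T - {x}) - {f} = T - {x}" using f by auto
  ultimately show "\<not> conn (T - {x}) u v"
    using not_forest_if_conn_Diff[of f "insert f (T - {x})"] f by auto
next
  assume nc: "\<not> conn (T - {x}) u v"
  have TE: "T \<subseteq> E" using T spanning_tree_iff by auto
  obtain a b where ab: "ends x = {a, b}" "a \<in> V" using x TE obtain_ends by blast
  have "finite T" using TE finite_E by (rule finite_subset)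
  then have "card (insert f (T - {x})) = card T"
    using x f card_Suc_Diff1[of T x] by simp
  then have "card (insert f (T - {x})) + 1 = card V"
    using card_spanning_tree[OF T] ab(2) by auto
  moreover have "insert f (T - {x}) \<subseteq> E" using f TE by auto
  ultimately show "spanning_tree V E ends (insert f (T - {x}))"
    using spanning_tree_if_card connects_exchange[OF T x ab(1) _ f(2) nc] f by auto
qed

lemma mem_fundamental_cycle_iff:
  assumes T: "spanning_tree V E ends T" and x: "x \<in> T" and f: "f \<in> E - T"
  shows "x \<in> fundamental_cycle V ends T f \<longleftrightarrow> spanning_tree V E ends (insert f (T - {x}))"
proof -
  obtain u v where uv: "ends f = {u, v}" "u \<in> V" "v \<in> V" using f obtain_ends by blast
  have "x \<in> tree_path_edges V T ends u' v' \<longleftrightarrow> \<not> conn (T - {x}) u v"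
    if "ends f = {u', v'}" for u' v'
  proof -
    have "(u' = u \<and> v' = v) \<or> (u' = v \<and> v' = u)"
      using that uv(1) by (auto simp: doubleton_eq_iff)
    moreover have "conn (T - {x}) v u \<longleftrightarrow> conn (T - {x}) u v" using conn_sym by blast
    ultimately show ?thesis using tree_path_edges_eq[OF T] uv x by auto
  qed
  moreover have "x \<noteq> f" using x f by auto
  ultimately have "x \<in> fundamental_cycle V ends T f \<longleftrightarrow> \<not> conn (T - {x}) u v"
    unfolding fundamental_cycle_def using uv(1) by blast
  then show ?thesis using spanning_tree_exchange_iff[OF T x f uv(1)] by simp
qed

lemma connects_hamiltonian_cycle_Diff:
  assumes hc: "is_hamiltonian_cycle V E ends vs es" and y: "y \<in> set es"
  shows "connects (set es - {y})"
proof -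
  have w: "is_walk V E ends vs es" and closed: "last vs = hd vs" and "distinct es" "set vs = V"
    using hc unfolding is_hamiltonian_cycle_def is_cycle_def by auto
  have len: "length vs = Suc (length es)" using w unfolding is_walk_def by auto
  obtain k where k: "k < length es" "es ! k = y" using y by (metis in_set_conv_nth)
  have "conn (set es - {y}) (vs ! 0) (vs ! i)" if "i \<le> length es" for i
  proof (cases "i \<le> k")
    case True
    show ?thesis
      by (rule conn_walk_segment[OF w])
        (use True k \<open>distinct es\<close> that in \<open>auto simp: nth_eq_iff_index_eq\<close>)
  next
    case False
    have "conn (set es - {y}) (vs ! i) (vs ! length es)"
      by (rule conn_walk_segment[OF w])
        (use False k \<open>distinct es\<close> that in \<open>auto simp: nth_eq_iff_index_eq\<close>)
    then show ?thesis using closed is_walk_hd_last[OF w] conn_sym by auto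
  qed
  then have root: "conn (set es - {y}) (vs ! 0) a" if "a \<in> V" for a
    using \<open>set vs = V\<close> that len by (metis in_set_conv_nth less_Suc_eq_le)
  show ?thesis unfolding connects_def using conn_trans[OF conn_sym[OF root] root] by blast
qed

lemma spanning_tree_hamiltonian_cycle_Diff:
  assumes hc: "is_hamiltonian_cycle V E ends vs es" and y: "y \<in> set es"
  shows "spanning_tree V E ends (set es - {y})"
proof (rule spanning_tree_if_card)
  have w: "is_walk V E ends vs es" and c: "last vs = hd vs" "distinct es" "distinct (butlast vs)"
    and "set vs = V"
    using hc unfolding is_hamiltonian_cycle_def is_cycle_def by auto
  have len: "length vs = Suc (length es)" and "set es \<subseteq> E" using w unfolding is_walk_def by auto
  then have "butlast vs \<noteq> []" using y by (cases vs) auto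
  then have "card V = length es"
    using set_butlast_closed_walk c \<open>set vs = V\<close> distinct_card len by fastforce
  moreover have "Suc (card (set es - {y})) = card (set es)"
    using y by (intro card_Suc_Diff1) simp_all
  ultimately show "card (set es - {y}) + 1 = card V" using distinct_card[OF c(2)] by simp
  show "set es - {y} \<subseteq> E" using \<open>set es \<subseteq> E\<close> by auto
  show "connects (set es - {y})" using connects_hamiltonian_cycle_Diff[OF hc y] .
qed

text \<open>Every edge of P separates the ends of e, so the path in P between them uses all of P.\<close>
lemma hamiltonian_cycle_of_exchange_tree:
  assumes P: "spanning_tree V E ends P" and e: "e \<in> E - P"
    and exch: "\<forall>f\<in>P. spanning_tree V E ends (insert e (P - {f}))"
  obtains vs es where "is_hamiltonian_cycle V E ends vs es" "e \<in> set es"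
proof -
  obtain a b where ab: "ends e = {a, b}" "a \<in> V" "b \<in> V" using e obtain_ends by blast
  then have "conn P a b" using P unfolding spanning_tree_iff connects_def by auto
  then obtain vs es where p: "is_path V P ends a b vs es" by (rule conn_obtain_path)
  then have w: "is_walk V P ends vs es" and h: "hd vs = a" "last vs = b" "distinct vs"
    unfolding is_path_def by auto
  have "set es = P"
    using tree_path_set[OF P p] exch spanning_tree_exchange_iff[OF P _ e ab(1)] by auto
  moreover have "V \<noteq> {}" using ab(2) by auto
  ultimately have "length vs = card V"
    using is_walk_distinct_edges[OF w h(3)] w card_spanning_tree[OF P]
    by (auto simp: distinct_card is_walk_def)
  then have "set vs = V" using w h(3) finite_V by (simp add: card_subset_eq distinct_card is_walk_def)
  have "P \<subseteq> E" using P spanning_tree_iff by auto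
  then have "is_walk V E ends (vs @ [a]) (es @ [e])"
    using is_walk_snoc[OF is_walk_mono[OF w order.refl], of E e a] e ab h
    by (auto simp: insert_commute)
  moreover have "distinct (es @ [e])"
    using is_walk_distinct_edges[OF w h(3)] e \<open>set es = P\<close> by auto
  moreover have "vs \<noteq> []" using w unfolding is_walk_def by auto
  ultimately have "is_hamiltonian_cycle V E ends (vs @ [a]) (es @ [e])"
    using h \<open>set vs = V\<close> ab unfolding is_hamiltonian_cycle_def is_cycle_def by auto
  then show ?thesis using that by simp
qed

lemma hamiltonian_cycle_through_iff:
  "(\<exists>vs es. is_hamiltonian_cycle V E ends vs es \<and> e \<in> set es) \<longleftrightarrow>
   (\<exists>P. spanning_tree V E ends P \<and> e \<in> E - P \<and> (\<forall>f\<in>P. spanning_tree V E ends (insert e (P - {f}))))"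
proof
  assume "\<exists>vs es. is_hamiltonian_cycle V E ends vs es \<and> e \<in> set es"
  then obtain vs es where hc: "is_hamiltonian_cycle V E ends vs es" and "e \<in> set es" by blast
  moreover have "set es \<subseteq> E"
    using hc unfolding is_hamiltonian_cycle_def is_cycle_def is_walk_def by auto
  moreover have "insert e (set es - {e} - {f}) = set es - {f}" if "f \<in> set es - {e}" for f
    using that \<open>e \<in> set es\<close> by auto
  ultimately show "\<exists>P. spanning_tree V E ends P \<and> e \<in> E - P \<and>
      (\<forall>f\<in>P. spanning_tree V E ends (insert e (P - {f})))"
    using spanning_tree_hamiltonian_cycle_Diff by (intro exI[of _ "set es - {e}"]) auto
next
  assume "\<exists>P. spanning_tree V E ends P \<and> e \<in> E - P \<and>
    (\<forall>f\<in>P. spanning_tree V E ends (insert e (P - {f})))"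
  then show "\<exists>vs es. is_hamiltonian_cycle V E ends vs es \<and> e \<in> set es"
    using hamiltonian_cycle_of_exchange_tree by blast
qed

lemma obtain_tree_containing_root:
  assumes T: "spanning_tree V E ends T" and e: "e \<in> E - T" "ends e = {u, v}" "u \<noteq> v"
    and fc: "\<forall>f\<in>E - T. e \<in> fundamental_cycle V ends T f"
  obtains T' where "spanning_tree V E ends T'" "e \<in> T'"
    "\<forall>f\<in>E - T'. spanning_tree V E ends (insert f (T' - {e}))"
proof -
  have TE: "T \<subseteq> E" using T spanning_tree_iff by auto
  have path_in_T: "tree_path_edges V T ends a b \<subseteq> T" if "ends f = {a, b}" "f \<in> E" for f a b
    using tree_path_edges_eq[OF T] ends_in_V[OF that(2,1)] by auto
  have "f = e" if f: "f \<in> E - T" for f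
  proof (rule ccontr)
    assume "f \<noteq> e"
    moreover have "e \<in> fundamental_cycle V ends T f" using fc f by blast
    ultimately have "e \<in> \<Union>{tree_path_edges V T ends a b | a b. ends f = {a, b}}"
      unfolding fundamental_cycle_def by blast
    then obtain a b where "ends f = {a, b}" "e \<in> tree_path_edges V T ends a b" by blast
    then show False using path_in_T[of f a b] f e(1) by auto
  qed
  then have co_tree: "E - T = {e}" using e(1) by blast
  have uv: "u \<in> V" "v \<in> V" using ends_in_V e by auto
  obtain x where x: "x \<in> T" "\<not> conn (T - {x}) u v"
    using obtain_tree_path_edge[OF T uv e(3)] .
  let ?T' = "insert e (T - {x})"
  have "spanning_tree V E ends ?T'"
    using spanning_tree_exchange_iff[OF T x(1) e(1,2)] x(2) by simp
  moreover have "E - ?T' = {x}" "insert x (?T' - {e}) = T" using co_tree x TE e(1) by auto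
  ultimately show ?thesis using that T by simp
qed

lemma rooted_fundamental_cycles_iff:
  assumes e: "e \<in> E" "ends e = {u, v}" "u \<noteq> v"
  shows "(\<exists>T. spanning_tree V E ends T \<and> (\<forall>f\<in>E - T. e \<in> fundamental_cycle V ends T f)) \<longleftrightarrow>
    (\<exists>T. spanning_tree V E ends T \<and> e \<in> T \<and> (\<forall>f\<in>E - T. spanning_tree V E ends (insert f (T - {e}))))"
proof
  assume "\<exists>T. spanning_tree V E ends T \<and> (\<forall>f\<in>E - T. e \<in> fundamental_cycle V ends T f)"
  then obtain T where T: "spanning_tree V E ends T"
    and fc: "\<forall>f\<in>E - T. e \<in> fundamental_cycle V ends T f" by blast
  show "\<exists>T. spanning_tree V E ends T \<and> e \<in> T \<and> (\<forall>f\<in>E - T. spanning_tree V E ends (insert f (T - {e})))"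
  proof (cases "e \<in> T")
    case True
    then have "\<forall>f\<in>E - T. spanning_tree V E ends (insert f (T - {e}))"
      using fc mem_fundamental_cycle_iff[OF T True] by blast
    then show ?thesis using T True by blast
  next
    case False
    then show ?thesis using obtain_tree_containing_root[OF T _ e(2,3) fc] e(1) by blast
  qed
next
  assume "\<exists>T. spanning_tree V E ends T \<and> e \<in> T \<and>
    (\<forall>f\<in>E - T. spanning_tree V E ends (insert f (T - {e})))"
  then obtain T where T: "spanning_tree V E ends T" and "e \<in> T"
    and "\<forall>f\<in>E - T. spanning_tree V E ends (insert f (T - {e}))" by blast
  then have "\<forall>f\<in>E - T. e \<in> fundamental_cycle V ends T f"
    using mem_fundamental_cycle_iff[OF T \<open>e \<in> T\<close>] by blast
  then show "\<exists>T. spanning_tree V E ends T \<and> (\<forall>f\<in>E - T. e \<in> fundamental_cycle V ends T f)"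
    using T by blast
qed

end

section \<open>Combinatorial maps and their duals\<close>

lemma comb_map_alpha_alpha: "comb_map D \<alpha> \<sigma> \<Longrightarrow> \<alpha> (\<alpha> d) = d"
  unfolding comb_map_def by (metis permutes_not_in)

lemma comb_map_alpha_in: "comb_map D \<alpha> \<sigma> \<Longrightarrow> d \<in> D \<Longrightarrow> \<alpha> d \<in> D"
  unfolding comb_map_def by (simp add: permutes_in_image)

lemma comb_map_sigma_in: "comb_map D \<alpha> \<sigma> \<Longrightarrow> d \<in> D \<Longrightarrow> \<sigma> d \<in> D"
  unfolding comb_map_def by (simp add: permutes_in_image)

lemma comb_map_permutation: "comb_map D \<alpha> \<sigma> \<Longrightarrow> permutation \<sigma>"
  unfolding comb_map_def permutation_permutes by auto

lemma comb_map_dual: "comb_map D \<alpha> \<sigma> \<Longrightarrow> comb_map D \<alpha> (\<sigma> \<circ> \<alpha>)"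
  unfolding comb_map_def by (auto intro: permutes_compose)

lemma comb_map_comp_alpha: "comb_map D \<alpha> \<sigma> \<Longrightarrow> \<sigma> \<circ> \<alpha> \<circ> \<alpha> = \<sigma>"
  by (simp add: fun_eq_iff comb_map_alpha_alpha)

lemma map_vertices_dual: "map_vertices D (\<sigma> \<circ> \<alpha>) = map_faces D \<alpha> \<sigma>"
  unfolding map_vertices_def map_faces_def map_vertex_def map_face_def ..

lemma primal_ends_dual: "primal_ends (\<sigma> \<circ> \<alpha>) = dual_ends \<alpha> \<sigma>"
  unfolding primal_ends_def dual_ends_def map_vertex_def map_face_def ..

lemma map_faces_dual: "comb_map D \<alpha> \<sigma> \<Longrightarrow> map_faces D \<alpha> (\<sigma> \<circ> \<alpha>) = map_vertices D \<sigma>"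
  unfolding map_vertices_def map_faces_def map_vertex_def map_face_def
  by (simp only: comb_map_comp_alpha)

lemma dual_ends_dual: "comb_map D \<alpha> \<sigma> \<Longrightarrow> dual_ends \<alpha> (\<sigma> \<circ> \<alpha>) = primal_ends \<sigma>"
  unfolding primal_ends_def dual_ends_def map_vertex_def map_face_def
  by (simp only: comb_map_comp_alpha)

lemma fin_multigraph_primal:
  assumes "comb_map D \<alpha> \<sigma>"
  shows "fin_multigraph (map_vertices D \<sigma>) (map_edges D \<alpha>) (primal_ends \<sigma>)"
proof
  show "finite (map_vertices D \<sigma>)" "finite (map_edges D \<alpha>)"
    using assms unfolding comb_map_def map_vertices_def map_edges_def by auto
  fix x assume "x \<in> map_edges D \<alpha>"
  then obtain d where "d \<in> D" "x = {d, \<alpha> d}" unfolding map_edges_def by auto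
  then show "\<exists>u\<in>map_vertices D \<sigma>. \<exists>v\<in>map_vertices D \<sigma>. primal_ends \<sigma> x = {u, v}"
    using comb_map_alpha_in[OF assms] unfolding primal_ends_def map_vertices_def by auto
qed

lemma fin_multigraph_dual:
  assumes "comb_map D \<alpha> \<sigma>"
  shows "fin_multigraph (map_faces D \<alpha> \<sigma>) (map_edges D \<alpha>) (dual_ends \<alpha> \<sigma>)"
  using fin_multigraph_primal[OF comb_map_dual[OF assms]]
  by (simp only: map_vertices_dual primal_ends_dual)

section \<open>Complements of forests connect the dual\<close>

definition map_transitive :: "'d set \<Rightarrow> ('d \<Rightarrow> 'd) \<Rightarrow> ('d \<Rightarrow> 'd) \<Rightarrow> bool" where
  "map_transitive D \<alpha> \<sigma> \<longleftrightarrow>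
     (\<forall>A \<subseteq> D. (\<forall>d\<in>A. \<sigma> d \<in> A \<and> \<alpha> d \<in> A) \<longrightarrow> A = {} \<or> A = D)"

lemma map_vertex_subset_if_closed: "d \<in> A \<Longrightarrow> \<forall>y\<in>A. \<sigma> y \<in> A \<Longrightarrow> map_vertex \<sigma> d \<subseteq> A"
  unfolding map_vertex_def
proof
  fix y assume closed: "d \<in> A" "\<forall>y\<in>A. \<sigma> y \<in> A" and "y \<in> orbit \<sigma> d"
  from this(3) show "y \<in> A" by (induction rule: orbit.induct) (use closed in auto)
qed

lemma mem_map_vertex: "comb_map D \<alpha> \<sigma> \<Longrightarrow> d \<in> map_vertex \<sigma> d"
  unfolding map_vertex_def by (rule permutation_self_in_orbit[OF comb_map_permutation])

lemma map_vertex_subset_if_adj: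
  assumes cm: "comb_map D \<alpha> \<sigma>" and A: "\<forall>d\<in>A. \<sigma> d \<in> A \<and> \<alpha> d \<in> A"
    and adj: "(w, w') \<in> fin_multigraph.adj (map_vertices D \<sigma>) (primal_ends \<sigma>) (map_edges D \<alpha>)"
    and "w \<subseteq> A"
  shows "w' \<subseteq> A"
proof -
  interpret G: fin_multigraph "map_vertices D \<sigma>" "map_edges D \<alpha>" "primal_ends \<sigma>"
    by (rule fin_multigraph_primal[OF cm])
  obtain x where "x \<in> map_edges D \<alpha>" "primal_ends \<sigma> x = {w, w'}"
    using adj unfolding G.adj_def by auto
  then obtain d where d: "{map_vertex \<sigma> d, map_vertex \<sigma> (\<alpha> d)} = {w, w'}"
    unfolding map_edges_def primal_ends_def by auto
  then have "d \<in> A \<or> \<alpha> d \<in> A"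
    using \<open>w \<subseteq> A\<close> mem_map_vertex[OF cm] by (auto simp: doubleton_eq_iff)
  then have "d \<in> A \<and> \<alpha> d \<in> A"
    by (elim disjE) (use A comb_map_alpha_alpha[OF cm, of d] in auto)
  moreover have closed: "\<forall>y\<in>A. \<sigma> y \<in> A" using A by blast
  ultimately have "map_vertex \<sigma> d \<subseteq> A" "map_vertex \<sigma> (\<alpha> d) \<subseteq> A"
    using map_vertex_subset_if_closed[OF _ closed] by blast+
  then show ?thesis using d by (auto simp: doubleton_eq_iff)
qed

lemma map_transitive_if_connected:
  assumes cm: "comb_map D \<alpha> \<sigma>"
    and conn: "graph_connected (map_vertices D \<sigma>) (map_edges D \<alpha>) (primal_ends \<sigma>)"
  shows "map_transitive D \<alpha> \<sigma>"
  unfolding map_transitive_def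
proof (intro allI impI)
  interpret G: fin_multigraph "map_vertices D \<sigma>" "map_edges D \<alpha>" "primal_ends \<sigma>"
    by (rule fin_multigraph_primal[OF cm])
  fix A assume "A \<subseteq> D" and A: "\<forall>d\<in>A. \<sigma> d \<in> A \<and> \<alpha> d \<in> A"
  show "A = {} \<or> A = D"
  proof (cases "A = {}")
    case False
    then obtain d0 where d0: "d0 \<in> A" by auto
    have closed: "\<forall>y\<in>A. \<sigma> y \<in> A" using A by blast
    have "d \<in> A" if "d \<in> D" for d
    proof -
      have "G.conn (map_edges D \<alpha>) (map_vertex \<sigma> d0) (map_vertex \<sigma> d)"
        using conn d0 \<open>A \<subseteq> D\<close> that
        unfolding G.graph_connected_iff G.connects_def by (auto simp: map_vertices_def)
      then have "(map_vertex \<sigma> d0, map_vertex \<sigma> d) \<in> (G.adj (map_edges D \<alpha>))\<^sup>*"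
        unfolding G.conn_def by simp
      then have "map_vertex \<sigma> d \<subseteq> A"
        by induction
          (use map_vertex_subset_if_closed[OF d0 closed] map_vertex_subset_if_adj[OF cm A] in auto)
      then show ?thesis using mem_map_vertex[OF cm] by auto
    qed
    then show ?thesis using \<open>A \<subseteq> D\<close> by auto
  qed simp
qed

lemma even_card_crossing:
  assumes "finite B" "f ` B = B" "inj_on f B"
  shows "even (card {y \<in> B. (y \<in> A) \<noteq> (f y \<in> A)})"
proof -
  define P where "P = {y \<in> B. y \<in> A \<and> f y \<notin> A}"
  define Q where "Q = {y \<in> B. y \<notin> A \<and> f y \<in> A}"
  define R where "R = {y \<in> B. y \<in> A \<and> f y \<in> A}"
  have fin: "finite P" "finite Q" "finite R" unfolding P_def Q_def R_def
    by (rule finite_subset[OF _ assms(1)], blast)+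
  have RP: "R \<union> P = {y \<in> B. y \<in> A}" and RQ: "R \<union> Q = {y \<in> B. f y \<in> A}"
    unfolding P_def Q_def R_def by auto
  have "f ` {y \<in> B. f y \<in> A} = {y \<in> B. y \<in> A}"
  proof
    show "f ` {y \<in> B. f y \<in> A} \<subseteq> {y \<in> B. y \<in> A}" using assms(2) by auto
    show "{y \<in> B. y \<in> A} \<subseteq> f ` {y \<in> B. f y \<in> A}"
    proof
      fix z assume z: "z \<in> {y \<in> B. y \<in> A}"
      then have "z \<in> f ` B" using assms(2) by simp
      then obtain y where "y \<in> B" "z = f y" by blast
      then show "z \<in> f ` {y \<in> B. f y \<in> A}" using z by auto
    qed
  qed
  moreover have "inj_on f {y \<in> B. f y \<in> A}" by (rule inj_on_subset[OF assms(3)]) auto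
  ultimately have "card (R \<union> P) = card (R \<union> Q)" unfolding RP RQ by (metis card_image)
  moreover have "card (R \<union> P) = card R + card P"
    by (rule card_Un_disjoint) (use fin in \<open>auto simp: R_def P_def\<close>)
  moreover have "card (R \<union> Q) = card R + card Q"
    by (rule card_Un_disjoint) (use fin in \<open>auto simp: R_def Q_def\<close>)
  moreover have "card (P \<union> Q) = card P + card Q"
    by (rule card_Un_disjoint) (use fin in \<open>auto simp: P_def Q_def\<close>)
  moreover have "{y \<in> B. (y \<in> A) \<noteq> (f y \<in> A)} = P \<union> Q" unfolding P_def Q_def by blast
  ultimately show ?thesis by simp
qed

lemma card_eq_twice_card_edges:
  assumes cm: "comb_map D \<alpha> \<sigma>" and B: "B \<subseteq> D" "\<forall>d\<in>B. \<alpha> d \<in> B"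
  shows "card B = 2 * card ((\<lambda>d. {d, \<alpha> d}) ` B)"
proof -
  let ?X = "(\<lambda>d. {d, \<alpha> d}) ` B"
  have edge_eq: "{d, \<alpha> d} = {z, \<alpha> z}" if "z \<in> {d, \<alpha> d}" for d z
    using that comb_map_alpha_alpha[OF cm] by auto
  have "finite B" using B(1) cm finite_subset unfolding comb_map_def by blast
  have "\<Union>?X = B" using B(2) by auto
  moreover have "pairwise disjnt ?X"
    unfolding pairwise_def disjnt_def using edge_eq by blast
  then have "card (\<Union>?X) = sum card ?X"
    by (rule card_Union_disjoint) (use \<open>finite B\<close> in auto)
  moreover have "card x = 2" if x: "x \<in> ?X" for x
  proof -
    obtain d where "d \<in> B" "x = {d, \<alpha> d}" using x by auto
    moreover have "\<alpha> d \<noteq> d" using \<open>d \<in> B\<close> B(1) cm unfolding comb_map_def by auto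
    ultimately show ?thesis by auto
  qed
  ultimately show ?thesis by simp
qed

lemma orbit_eq_if_mem: "permutation f \<Longrightarrow> y \<in> orbit f x \<Longrightarrow> orbit f y = orbit f x"
  by (rule orbit_cyclic_eq3[OF cyclic_on_orbit'])

lemma card_vertices_crossing:
  assumes cm: "comb_map D \<alpha> \<sigma>" and "B \<subseteq> D"
    and cross: "\<forall>d\<in>D. d \<in> B \<longleftrightarrow> (d \<in> A) \<noteq> (\<sigma> d \<in> A)"
  shows "2 * card (map_vertex \<sigma> ` B) \<le> card B"
proof -
  have ps: "permutation \<sigma>" using comb_map_permutation[OF cm] .
  have finD: "finite D" using cm unfolding comb_map_def by simp
  have even: "even (card (v \<inter> B))" and ne: "v \<inter> B \<noteq> {}" and fin: "finite (v \<inter> B)"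
    if v: "v \<in> map_vertex \<sigma> ` B" for v
  proof -
    obtain d where d: "d \<in> B" "v = orbit \<sigma> d" using v unfolding map_vertex_def by auto
    have vD: "v \<subseteq> D" using d \<open>B \<subseteq> D\<close> cm unfolding comb_map_def by (metis permutes_orbit_subset subsetD)
    then show "finite (v \<inter> B)" using finD finite_subset by blast
    have inj: "inj_on \<sigma> v" using ps permutation_bijective bij_is_inj inj_on_subset by blast
    have "\<sigma> ` v \<subseteq> v" using d by (auto intro: orbit.step)
    then have "\<sigma> ` v = v" using endo_inj_surj[OF finite_subset[OF vD finD] _ inj] by blast
    moreover have "v \<inter> B = {y \<in> v. (y \<in> A) \<noteq> (\<sigma> y \<in> A)}" using cross vD by auto
    ultimately show "even (card (v \<inter> B))"
      using even_card_crossing[OF finite_subset[OF vD finD] _ inj] by simp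
    show "v \<inter> B \<noteq> {}" using d permutation_self_in_orbit[OF ps] by auto
  qed
  have "B = (\<Union>v\<in>map_vertex \<sigma> ` B. v \<inter> B)"
    unfolding map_vertex_def using permutation_self_in_orbit[OF ps] by auto
  moreover have "card (\<Union>v\<in>map_vertex \<sigma> ` B. v \<inter> B) = (\<Sum>v\<in>map_vertex \<sigma> ` B. card (v \<inter> B))"
  proof (rule card_UN_disjoint)
    show "finite (map_vertex \<sigma> ` B)" using \<open>B \<subseteq> D\<close> finD finite_subset by blast
    show "\<forall>v\<in>map_vertex \<sigma> ` B. \<forall>w\<in>map_vertex \<sigma> ` B. v \<noteq> w \<longrightarrow> v \<inter> B \<inter> (w \<inter> B) = {}"
      unfolding map_vertex_def using orbit_eq_if_mem[OF ps] by blast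
  qed (use fin in blast)
  moreover have "card (v \<inter> B) \<ge> 2" if "v \<in> map_vertex \<sigma> ` B" for v
    using even[OF that] ne[OF that] fin[OF that] by (metis card_0_eq dvd_imp_le le_neq_implies_less
        less_2_cases not_less_eq_eq odd_one zero_less_iff_neq_zero)
  then have "(\<Sum>v\<in>map_vertex \<sigma> ` B. 2) \<le> (\<Sum>v\<in>map_vertex \<sigma> ` B. card (v \<inter> B))"
    by (rule sum_mono)
  ultimately show ?thesis by simp
qed

lemma card_edges_lt_card_vertices_if_forest:
  assumes cm: "comb_map D \<alpha> \<sigma>" and B: "B \<subseteq> D" "\<forall>d\<in>B. \<alpha> d \<in> B" "B \<noteq> {}"
    and forest: "fin_multigraph.forest (map_vertices D \<sigma>) (primal_ends \<sigma>) ((\<lambda>d. {d, \<alpha> d}) ` B)"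
  shows "card ((\<lambda>d. {d, \<alpha> d}) ` B) + 1 \<le> card (map_vertex \<sigma> ` B)"
proof -
  let ?X = "(\<lambda>d. {d, \<alpha> d}) ` B" and ?VX = "map_vertex \<sigma> ` B"
  interpret G: fin_multigraph "map_vertices D \<sigma>" "map_edges D \<alpha>" "primal_ends \<sigma>"
    by (rule fin_multigraph_primal[OF cm])
  have "finite B" using B(1) cm finite_subset unfolding comb_map_def by blast
  interpret K: fin_multigraph ?VX ?X "primal_ends \<sigma>"
  proof
    show "finite ?VX" "finite ?X" using \<open>finite B\<close> by auto
    fix x assume "x \<in> ?X"
    then show "\<exists>u\<in>?VX. \<exists>v\<in>?VX. primal_ends \<sigma> x = {u, v}"
      using B(2) unfolding primal_ends_def by blast
  qed
  have "?VX \<subseteq> map_vertices D \<sigma>" using B(1) unfolding map_vertices_def by auto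
  have "K.forest ?X"
    unfolding K.forest_def
  proof
    assume "\<exists>vs es. is_cycle ?VX ?X (primal_ends \<sigma>) vs es"
    then obtain vs es where "is_cycle ?VX ?X (primal_ends \<sigma>) vs es" by blast
    then have "is_cycle (map_vertices D \<sigma>) ?X (primal_ends \<sigma>) vs es"
      using is_cycle_mono \<open>?VX \<subseteq> map_vertices D \<sigma>\<close> by blast
    then show False using forest unfolding G.forest_def by blast
  qed
  moreover have "?VX \<noteq> {}" using B(3) by blast
  ultimately show ?thesis using K.card_forest[of ?X] by blast
qed

text \<open>The boundary darts number twice their edges and at least twice their vertices, while a
  forest has fewer edges than vertices.\<close>
lemma boundary_empty_if_forest:
  assumes cm: "comb_map D \<alpha> \<sigma>" and faces: "\<forall>d\<in>D. d \<in> A \<longleftrightarrow> \<sigma> (\<alpha> d) \<in> A"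
    and forest: "fin_multigraph.forest (map_vertices D \<sigma>) (primal_ends \<sigma>)
                   ((\<lambda>d. {d, \<alpha> d}) ` {d \<in> D. (d \<in> A) \<noteq> (\<alpha> d \<in> A)})"
  shows "{d \<in> D. (d \<in> A) \<noteq> (\<alpha> d \<in> A)} = {}"
proof (rule ccontr)
  let ?B = "{d \<in> D. (d \<in> A) \<noteq> (\<alpha> d \<in> A)}"
  assume "?B \<noteq> {}"
  have aa: "\<alpha> (\<alpha> d) = d" for d using comb_map_alpha_alpha[OF cm] .
  have B_alpha: "\<forall>d\<in>?B. \<alpha> d \<in> ?B" using comb_map_alpha_in[OF cm] by (auto simp: aa)
  have "card ?B = 2 * card ((\<lambda>d. {d, \<alpha> d}) ` ?B)"
    by (rule card_eq_twice_card_edges[OF cm _ B_alpha]) auto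
  moreover have "2 * card (map_vertex \<sigma> ` ?B) \<le> card ?B"
  proof (rule card_vertices_crossing[OF cm])
    show "\<forall>d\<in>D. d \<in> ?B \<longleftrightarrow> (d \<in> A) \<noteq> (\<sigma> d \<in> A)"
    proof
      fix d assume "d \<in> D"
      then have "\<alpha> d \<in> A \<longleftrightarrow> \<sigma> (\<alpha> (\<alpha> d)) \<in> A" using faces comb_map_alpha_in[OF cm] by blast
      then show "d \<in> ?B \<longleftrightarrow> (d \<in> A) \<noteq> (\<sigma> d \<in> A)" using \<open>d \<in> D\<close> aa by simp
    qed
  qed auto
  moreover have "card ((\<lambda>d. {d, \<alpha> d}) ` ?B) + 1 \<le> card (map_vertex \<sigma> ` ?B)"
    by (rule card_edges_lt_card_vertices_if_forest[OF cm _ B_alpha \<open>?B \<noteq> {}\<close> forest]) auto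
  ultimately show False by linarith
qed

lemma union_of_faces_eq_darts:
  assumes cm: "comb_map D \<alpha> \<sigma>" and tr: "map_transitive D \<alpha> \<sigma>"
    and forest: "fin_multigraph.forest (map_vertices D \<sigma>) (primal_ends \<sigma>) S"
    and A: "A \<subseteq> D" "A \<noteq> {}" and faces: "\<forall>d\<in>D. d \<in> A \<longleftrightarrow> \<sigma> (\<alpha> d) \<in> A"
    and cross: "\<forall>d\<in>D. {d, \<alpha> d} \<notin> S \<longrightarrow> (d \<in> A \<longleftrightarrow> \<alpha> d \<in> A)"
  shows "A = D"
proof -
  interpret G: fin_multigraph "map_vertices D \<sigma>" "map_edges D \<alpha>" "primal_ends \<sigma>"
    by (rule fin_multigraph_primal[OF cm])
  have "(\<lambda>d. {d, \<alpha> d}) ` {d \<in> D. (d \<in> A) \<noteq> (\<alpha> d \<in> A)} \<subseteq> S" using cross by blast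
  then have "G.forest ((\<lambda>d. {d, \<alpha> d}) ` {d \<in> D. (d \<in> A) \<noteq> (\<alpha> d \<in> A)})"
    by (rule G.forest_mono[OF forest])
  then have no_crossing: "{d \<in> D. (d \<in> A) \<noteq> (\<alpha> d \<in> A)} = {}"
    by (rule boundary_empty_if_forest[OF cm faces])
  have "\<sigma> d \<in> A \<and> \<alpha> d \<in> A" if "d \<in> A" for d
  proof -
    have "\<alpha> d \<in> A" "\<alpha> d \<in> D" using no_crossing that A(1) comb_map_alpha_in[OF cm] by auto
    then have "\<sigma> (\<alpha> (\<alpha> d)) \<in> A" using faces by blast
    then show ?thesis using \<open>\<alpha> d \<in> A\<close> comb_map_alpha_alpha[OF cm] by simp
  qed
  then show ?thesis using tr A unfolding map_transitive_def by blast
qed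

lemma connects_dual_complement_of_forest:
  assumes cm: "comb_map D \<alpha> \<sigma>" and tr: "map_transitive D \<alpha> \<sigma>"
    and forest: "fin_multigraph.forest (map_vertices D \<sigma>) (primal_ends \<sigma>) S"
  shows "fin_multigraph.connects (map_faces D \<alpha> \<sigma>) (dual_ends \<alpha> \<sigma>) (map_edges D \<alpha> - S)"
proof -
  interpret H: fin_multigraph "map_faces D \<alpha> \<sigma>" "map_edges D \<alpha>" "dual_ends \<alpha> \<sigma>"
    by (rule fin_multigraph_dual[OF cm])
  let ?E = "map_edges D \<alpha>" and ?face = "map_face \<alpha> \<sigma>"
  have face_in: "?face d \<in> map_faces D \<alpha> \<sigma>" if "d \<in> D" for d
    using that unfolding map_faces_def by auto
  have conn_face: "H.conn (?E - S) (?face d0) (?face d)" if d0: "d0 \<in> D" and d: "d \<in> D" for d0 d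
  proof -
    define A where "A = {d \<in> D. H.conn (?E - S) (?face d0) (?face d)}"
    have "?face (\<sigma> (\<alpha> d)) = ?face d" for d
      using permutation_orbit_step[OF comb_map_permutation[OF comb_map_dual[OF cm]], of d]
      unfolding map_face_def by simp
    then have faces: "\<forall>d\<in>D. d \<in> A \<longleftrightarrow> \<sigma> (\<alpha> d) \<in> A"
      using comb_map_sigma_in[OF cm] comb_map_alpha_in[OF cm] unfolding A_def by auto
    have cross: "\<forall>d\<in>D. {d, \<alpha> d} \<notin> S \<longrightarrow> (d \<in> A \<longleftrightarrow> \<alpha> d \<in> A)"
    proof (intro ballI impI)
      fix d assume d: "d \<in> D" and "{d, \<alpha> d} \<notin> S"
      then have "{d, \<alpha> d} \<in> ?E - S" unfolding map_edges_def by auto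
      moreover have "dual_ends \<alpha> \<sigma> {d, \<alpha> d} = {?face d, ?face (\<alpha> d)}"
        unfolding dual_ends_def by simp
      ultimately have edge: "H.conn (?E - S) (?face d) (?face (\<alpha> d))"
        using face_in[OF d] face_in[OF comb_map_alpha_in[OF cm d]] by (rule H.conn_edge)
      show "d \<in> A \<longleftrightarrow> \<alpha> d \<in> A"
        using H.conn_trans[OF _ edge] H.conn_trans[OF _ H.conn_sym[OF edge]]
          d comb_map_alpha_in[OF cm d] unfolding A_def by blast
    qed
    have "d0 \<in> A" using d0 H.conn_refl face_in unfolding A_def by blast
    then have "A = D"
      by (intro union_of_faces_eq_darts[OF cm tr forest _ _ faces cross]) (auto simp: A_def)
    then show ?thesis using d unfolding A_def by blast
  qed
  show ?thesis unfolding H.connects_def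
  proof (intro ballI)
    fix p q assume "p \<in> map_faces D \<alpha> \<sigma>" "q \<in> map_faces D \<alpha> \<sigma>"
    then obtain d0 d1 where "d0 \<in> D" "p = ?face d0" "d1 \<in> D" "q = ?face d1"
      unfolding map_faces_def by auto
    then show "H.conn (?E - S) p q" using conn_face by blast
  qed
qed

section \<open>Spanning trees of a plane graph and of its dual\<close>

lemma spanning_tree_complement_dual:
  assumes pg: "plane_graph D \<alpha> \<sigma>"
    and T: "spanning_tree (map_vertices D \<sigma>) (map_edges D \<alpha>) (primal_ends \<sigma>) T"
  shows "spanning_tree (map_faces D \<alpha> \<sigma>) (map_edges D \<alpha>) (dual_ends \<alpha> \<sigma>) (map_edges D \<alpha> - T)"
proof -
  have cm: "comb_map D \<alpha> \<sigma>"
    and conn: "graph_connected (map_vertices D \<sigma>) (map_edges D \<alpha>) (primal_ends \<sigma>)"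
    and euler: "int (card (map_vertices D \<sigma>)) - int (card (map_edges D \<alpha>))
                  + int (card (map_faces D \<alpha> \<sigma>)) = 2"
    using pg unfolding plane_graph_def by auto
  interpret G: fin_multigraph "map_vertices D \<sigma>" "map_edges D \<alpha>" "primal_ends \<sigma>"
    by (rule fin_multigraph_primal[OF cm])
  interpret H: fin_multigraph "map_faces D \<alpha> \<sigma>" "map_edges D \<alpha>" "dual_ends \<alpha> \<sigma>"
    by (rule fin_multigraph_dual[OF cm])
  have TE: "T \<subseteq> map_edges D \<alpha>" and "G.forest T" using T G.spanning_tree_iff by auto
  have "H.connects (map_edges D \<alpha> - T)"
    by (rule connects_dual_complement_of_forest[OF cm map_transitive_if_connected[OF cm conn]
          \<open>G.forest T\<close>])
  moreover have "map_vertices D \<sigma> \<noteq> {}" using euler unfolding map_vertices_def map_faces_def map_edges_def by auto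
  then have "card T + 1 = card (map_vertices D \<sigma>)" by (rule G.card_spanning_tree[OF T])
  moreover have "card (map_edges D \<alpha> - T) = card (map_edges D \<alpha>) - card T"
    "card T \<le> card (map_edges D \<alpha>)"
    using TE G.finite_E by (auto simp: card_Diff_subset finite_subset card_mono)
  ultimately have "card (map_edges D \<alpha> - T) + 1 = card (map_faces D \<alpha> \<sigma>)"
    using euler by linarith
  then show ?thesis using \<open>H.connects (map_edges D \<alpha> - T)\<close> H.spanning_tree_if_card by blast
qed

lemma plane_graph_dual:
  assumes pg: "plane_graph D \<alpha> \<sigma>"
  shows "plane_graph D \<alpha> (\<sigma> \<circ> \<alpha>)"
proof -
  have cm: "comb_map D \<alpha> \<sigma>"
    and conn: "graph_connected (map_vertices D \<sigma>) (map_edges D \<alpha>) (primal_ends \<sigma>)"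
    and euler: "int (card (map_vertices D \<sigma>)) - int (card (map_edges D \<alpha>))
                  + int (card (map_faces D \<alpha> \<sigma>)) = 2"
    using pg unfolding plane_graph_def by auto
  interpret G: fin_multigraph "map_vertices D \<sigma>" "map_edges D \<alpha>" "primal_ends \<sigma>"
    by (rule fin_multigraph_primal[OF cm])
  interpret H: fin_multigraph "map_faces D \<alpha> \<sigma>" "map_edges D \<alpha>" "dual_ends \<alpha> \<sigma>"
    by (rule fin_multigraph_dual[OF cm])
  have "G.forest {}" unfolding G.forest_def is_cycle_def is_walk_def by auto
  then have "H.connects (map_edges D \<alpha> - {})"
    by (rule connects_dual_complement_of_forest[OF cm map_transitive_if_connected[OF cm conn]])
  then have "graph_connected (map_faces D \<alpha> \<sigma>) (map_edges D \<alpha>) (dual_ends \<alpha> \<sigma>)"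
    by (simp add: H.graph_connected_iff)
  then show ?thesis using euler comb_map_dual[OF cm]
    unfolding plane_graph_def map_vertices_dual primal_ends_dual map_faces_dual[OF cm] by simp
qed

lemma spanning_tree_dual_iff:
  assumes pg: "plane_graph D \<alpha> \<sigma>"
  shows "spanning_tree (map_vertices D \<sigma>) (map_edges D \<alpha>) (primal_ends \<sigma>) T \<longleftrightarrow>
    T \<subseteq> map_edges D \<alpha> \<and>
    spanning_tree (map_faces D \<alpha> \<sigma>) (map_edges D \<alpha>) (dual_ends \<alpha> \<sigma>) (map_edges D \<alpha> - T)"
proof
  assume "spanning_tree (map_vertices D \<sigma>) (map_edges D \<alpha>) (primal_ends \<sigma>) T"
  then show "T \<subseteq> map_edges D \<alpha> \<and>
    spanning_tree (map_faces D \<alpha> \<sigma>) (map_edges D \<alpha>) (dual_ends \<alpha> \<sigma>) (map_edges D \<alpha> - T)"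
    using spanning_tree_complement_dual[OF pg] unfolding spanning_tree_def by blast
next
  have cm: "comb_map D \<alpha> \<sigma>" using pg unfolding plane_graph_def by simp
  assume T: "T \<subseteq> map_edges D \<alpha> \<and>
    spanning_tree (map_faces D \<alpha> \<sigma>) (map_edges D \<alpha>) (dual_ends \<alpha> \<sigma>) (map_edges D \<alpha> - T)"
  then have "spanning_tree (map_vertices D (\<sigma> \<circ> \<alpha>)) (map_edges D \<alpha>) (primal_ends (\<sigma> \<circ> \<alpha>))
      (map_edges D \<alpha> - T)"
    by (simp add: map_vertices_dual primal_ends_dual)
  from spanning_tree_complement_dual[OF plane_graph_dual[OF pg] this]
  show "spanning_tree (map_vertices D \<sigma>) (map_edges D \<alpha>) (primal_ends \<sigma>) T"
    using T by (simp add: map_faces_dual[OF cm] dual_ends_dual[OF cm] double_diff)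
qed

lemma exchange_trees_dual_iff:
  assumes pg: "plane_graph D \<alpha> \<sigma>" and e: "e \<in> map_edges D \<alpha>"
  shows "(\<exists>T. spanning_tree (map_vertices D \<sigma>) (map_edges D \<alpha>) (primal_ends \<sigma>) T \<and> e \<in> T \<and>
           (\<forall>f\<in>map_edges D \<alpha> - T.
              spanning_tree (map_vertices D \<sigma>) (map_edges D \<alpha>) (primal_ends \<sigma>) (insert f (T - {e})))) \<longleftrightarrow>
         (\<exists>P. spanning_tree (map_faces D \<alpha> \<sigma>) (map_edges D \<alpha>) (dual_ends \<alpha> \<sigma>) P \<and>
           e \<in> map_edges D \<alpha> - P \<and>
           (\<forall>f\<in>P. spanning_tree (map_faces D \<alpha> \<sigma>) (map_edges D \<alpha>) (dual_ends \<alpha> \<sigma>) (insert e (P - {f}))))"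
  (is "(\<exists>T. ?G T \<and> e \<in> T \<and> (\<forall>f\<in>?E - T. ?G (insert f (T - {e})))) \<longleftrightarrow>
       (\<exists>P. ?H P \<and> e \<in> ?E - P \<and> (\<forall>f\<in>P. ?H (insert e (P - {f}))))")
proof
  note dual_iff = spanning_tree_dual_iff[OF pg]
  have swap: "?E - insert f (T - {e}) = insert e ((?E - T) - {f})"
    if "T \<subseteq> ?E" "e \<in> T" "f \<in> ?E - T" for T f
    using that e by auto
  {
    assume "\<exists>T. ?G T \<and> e \<in> T \<and> (\<forall>f\<in>?E - T. ?G (insert f (T - {e})))"
    then obtain T where T: "?G T" "e \<in> T" and exch: "\<forall>f\<in>?E - T. ?G (insert f (T - {e}))" by blast
    have "T \<subseteq> ?E" using T(1) unfolding spanning_tree_def by simp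
    then have "?H (insert e ((?E - T) - {f}))" if "f \<in> ?E - T" for f
      using exch that dual_iff swap T(2) by metis
    then show "\<exists>P. ?H P \<and> e \<in> ?E - P \<and> (\<forall>f\<in>P. ?H (insert e (P - {f})))"
      using T dual_iff by blast
  }
  assume "\<exists>P. ?H P \<and> e \<in> ?E - P \<and> (\<forall>f\<in>P. ?H (insert e (P - {f})))"
  then obtain P where P: "?H P" "e \<in> ?E - P" and exch: "\<forall>f\<in>P. ?H (insert e (P - {f}))" by blast
  have "P \<subseteq> ?E" using P(1) unfolding spanning_tree_def by simp
  then have co: "?E - (?E - P) = P" by auto
  then have T: "?G (?E - P)" using dual_iff P(1) by simp
  have "?G (insert f ((?E - P) - {e}))" if "f \<in> P" for f
  proof -
    have "insert f ((?E - P) - {e}) \<subseteq> ?E" using that \<open>P \<subseteq> ?E\<close> by auto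
    moreover have "?E - insert f ((?E - P) - {e}) = insert e (P - {f})"
      using swap[of "?E - P" f] co that P(2) by auto
    ultimately show ?thesis using dual_iff exch that by simp
  qed
  then show "\<exists>T. ?G T \<and> e \<in> T \<and> (\<forall>f\<in>?E - T. ?G (insert f (T - {e})))"
    using T P(2) co by (intro exI[of _ "?E - P"]) auto
qed

theorem mainTheorem12:
  fixes D :: "'d set" and \<alpha> \<sigma> :: "'d \<Rightarrow> 'd" and e :: "'d set"
  assumes "plane_graph D \<alpha> \<sigma>"
    and "simple_map D \<alpha> \<sigma>"
    and "e \<in> map_edges D \<alpha>"
  shows "(\<exists>T. spanning_tree (map_vertices D \<sigma>) (map_edges D \<alpha>) (primal_ends \<sigma>) T \<and>
             (\<forall>f \<in> map_edges D \<alpha> - T.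
                e \<in> fundamental_cycle (map_vertices D \<sigma>) (primal_ends \<sigma>) T f))
     \<longleftrightarrow>
         (\<exists>vs es. is_hamiltonian_cycle (map_faces D \<alpha> \<sigma>) (map_edges D \<alpha>) (dual_ends \<alpha> \<sigma>) vs es
             \<and> e \<in> set es)"
proof -
  have cm: "comb_map D \<alpha> \<sigma>" using assms(1) unfolding plane_graph_def by simp
  interpret G: fin_multigraph "map_vertices D \<sigma>" "map_edges D \<alpha>" "primal_ends \<sigma>"
    by (rule fin_multigraph_primal[OF cm])
  interpret H: fin_multigraph "map_faces D \<alpha> \<sigma>" "map_edges D \<alpha>" "dual_ends \<alpha> \<sigma>"
    by (rule fin_multigraph_dual[OF cm])
  obtain d where d: "d \<in> D" "e = {d, \<alpha> d}" using assms(3) unfolding map_edges_def by auto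
  then have ends: "primal_ends \<sigma> e = {map_vertex \<sigma> d, map_vertex \<sigma> (\<alpha> d)}"
    unfolding primal_ends_def by simp
  have no_loop: "map_vertex \<sigma> d \<noteq> map_vertex \<sigma> (\<alpha> d)"
    using assms(2) d unfolding simple_map_def by auto
  show ?thesis
    by (simp only: G.rooted_fundamental_cycles_iff[OF assms(3) ends no_loop]
        exchange_trees_dual_iff[OF assms(1,3)] H.hamiltonian_cycle_through_iff)
qed

end
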